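(* Consider clipped ADOPT with $\beta_1,\beta_2\in[0,1)$, $\epsilon>0$, learning rates $\alpha_t>0$, clipping values $c_t\ge0$, and deterministic $\theta_0$: $m_0=0$, $v_0=g_0\odot g_0$, and for $t=1,\dots,T$, $$m_t=\beta_1m_{t-1}+(1-\beta_1)\,\mathrm{Clip}\Big(\frac{g_t}{\max\{\sqrt{v_{t-1}},\epsilon\}},c_t\Big),\quad\theta_t=\theta_{t-1}-\alpha_tm_t,\quad v_t=\beta_2v_{t-1}+(1-\beta_2)g_t\odot g_t,$$ where $g_0,g_1,\dots$ are random vectors in $\mathbb{R}^D$ with $\mathbb{E}\|g_t\|^2\le G^2$ for all $t\ge0$. Then for all $0\le t\le T$, $$\mathbb{E}\big[\|m_t\|^2\big]\le\frac{2G^2}{\epsilon^2}.$$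
   Context: For $a\in\mathbb{R}^D$ and $c\ge0$, $\mathrm{Clip}(a,c)_i=\min\{\max\{a_i,-c\},c\}$. Norms are Euclidean; $\odot$, square root, division and $\max\{\cdot,\epsilon\}$ act elementwise. *)

theory Defs
  imports "HOL-Probability.Probability"
begin

definition Clip :: "real^'d \<Rightarrow> real \<Rightarrow> real^'d" where
  "Clip a c = (\<chi> i. min (max (a $ i) (- c)) c)"

text \<open>Second-moment estimate v_t of clipped ADOPT, for a fixed realisation g of the gradients.\<close>
fun adopt_v :: "real \<Rightarrow> (nat \<Rightarrow> real^'d) \<Rightarrow> nat \<Rightarrow> real^'d" where
  "adopt_v \<beta>2 g 0 = (\<chi> i. g 0 $ i * g 0 $ i)"
| "adopt_v \<beta>2 g (Suc t) =
     (\<chi> i. \<beta>2 * adopt_v \<beta>2 g t $ i + (1 - \<beta>2) * (g (Suc t) $ i * g (Suc t) $ i))"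

fun adopt_m :: "real \<Rightarrow> real \<Rightarrow> real \<Rightarrow> (nat \<Rightarrow> real) \<Rightarrow> (nat \<Rightarrow> real^'d) \<Rightarrow> nat \<Rightarrow> real^'d" where
  "adopt_m \<beta>1 \<beta>2 \<epsilon> c g 0 = 0"
| "adopt_m \<beta>1 \<beta>2 \<epsilon> c g (Suc t) =
     \<beta>1 *\<^sub>R adopt_m \<beta>1 \<beta>2 \<epsilon> c g t
     + (1 - \<beta>1) *\<^sub>R Clip (\<chi> i. g (Suc t) $ i / max (sqrt (adopt_v \<beta>2 g t $ i)) \<epsilon>) (c (Suc t))"

fun adopt_theta :: "real^'d \<Rightarrow> (nat \<Rightarrow> real) \<Rightarrow> real \<Rightarrow> real \<Rightarrow> real \<Rightarrow> (nat \<Rightarrow> real) \<Rightarrow> (nat \<Rightarrow> real^'d) \<Rightarrow> nat \<Rightarrow> real^'d" where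
  "adopt_theta \<theta>0 \<alpha> \<beta>1 \<beta>2 \<epsilon> c g 0 = \<theta>0"
| "adopt_theta \<theta>0 \<alpha> \<beta>1 \<beta>2 \<epsilon> c g (Suc t) =
     adopt_theta \<theta>0 \<alpha> \<beta>1 \<beta>2 \<epsilon> c g t - \<alpha> (Suc t) *\<^sub>R adopt_m \<beta>1 \<beta>2 \<epsilon> c g (Suc t)"

end

theory Submission
  imports Defs
begin

text \<open>The momentum is an exponential moving average of clipped, rescaled gradients. Since
  \<open>max {sqrt v, \<epsilon>} \<ge> \<epsilon>\<close> and clipping only shrinks coordinates, every averaged vector has norm at
  most \<open>\<parallel>g\<^sub>t\<parallel> / \<epsilon>\<close>. By convexity of \<open>\<parallel>\<cdot>\<parallel>\<^sup>2\<close>, \<open>\<parallel>m\<^sub>t\<parallel>\<^sup>2\<close> is dominated by the same moving average of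
  \<open>\<parallel>g\<^sub>s\<parallel>\<^sup>2 / \<epsilon>\<^sup>2\<close>, whose expectation is a moving average of numbers bounded by \<open>G\<^sup>2 / \<epsilon>\<^sup>2\<close>.
  This even gives the bound without the factor 2.\<close>

fun ema :: "real \<Rightarrow> (nat \<Rightarrow> 'a::real_vector) \<Rightarrow> nat \<Rightarrow> 'a" where
  "ema b x 0 = 0"
| "ema b x (Suc n) = b *\<^sub>R ema b x n + (1 - b) *\<^sub>R x (Suc n)"

lemma ema_mono:
  fixes x y :: "nat \<Rightarrow> real"
  assumes "0 \<le> b" "b \<le> 1" and "\<And>s. x s \<le> y s"
  shows "ema b x n \<le> ema b y n"
  using assms by (induction n) (auto intro!: add_mono mult_left_mono)

lemma ema_le_bound:
  fixes x :: "nat \<Rightarrow> real"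
  assumes "0 \<le> b" "b \<le> 1" "0 \<le> B" and "\<And>s. x s \<le> B"
  shows "ema b x n \<le> B"
proof (induction n)
  case (Suc n)
  have "ema b x (Suc n) \<le> b * B + (1 - b) * B"
    using Suc assms by (auto intro!: add_mono mult_left_mono)
  then show ?case by (simp add: algebra_simps)
qed (use assms in simp)

lemma power2_norm_convex_combination_le:
  fixes x y :: "'a::real_normed_vector"
  assumes "0 \<le> a" "a \<le> 1"
  shows "(norm (a *\<^sub>R x + (1 - a) *\<^sub>R y))\<^sup>2 \<le> a * (norm x)\<^sup>2 + (1 - a) * (norm y)\<^sup>2"
proof -
  have "norm (a *\<^sub>R x + (1 - a) *\<^sub>R y) \<le> a * norm x + (1 - a) * norm y"
    using norm_triangle_ineq[of "a *\<^sub>R x" "(1 - a) *\<^sub>R y"] assms by simp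
  then have "(norm (a *\<^sub>R x + (1 - a) *\<^sub>R y))\<^sup>2 \<le> (a * norm x + (1 - a) * norm y)\<^sup>2"
    by (rule power_mono) simp
  also have "\<dots> = a * (norm x)\<^sup>2 + (1 - a) * (norm y)\<^sup>2 - a * (1 - a) * (norm x - norm y)\<^sup>2"
    by (simp add: power2_eq_square algebra_simps)
  also have "\<dots> \<le> a * (norm x)\<^sup>2 + (1 - a) * (norm y)\<^sup>2"
    using assms by simp
  finally show ?thesis .
qed

lemma power2_norm_ema_le:
  assumes "0 \<le> b" "b \<le> 1"
  shows "(norm (ema b x n))\<^sup>2 \<le> ema b (\<lambda>s. (norm (x s))\<^sup>2) n"
proof (induction n)
  case (Suc n)
  have "(norm (ema b x (Suc n)))\<^sup>2 \<le> b * (norm (ema b x n))\<^sup>2 + (1 - b) * (norm (x (Suc n)))\<^sup>2"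
    using power2_norm_convex_combination_le assms by simp
  also have "\<dots> \<le> ema b (\<lambda>s. (norm (x s))\<^sup>2) (Suc n)"
    using Suc assms by (simp add: mult_left_mono)
  finally show ?case .
qed simp

lemma integrable_ema:
  assumes "\<And>s. integrable M (f s)"
  shows "integrable M (\<lambda>\<omega>. ema b (\<lambda>s. f s \<omega>) n :: real)"
  using assms by (induction n) auto

lemma integral_ema:
  assumes "\<And>s. integrable M (f s)"
  shows "integral\<^sup>L M (\<lambda>\<omega>. ema b (\<lambda>s. f s \<omega>) n :: real) = ema b (\<lambda>s. integral\<^sup>L M (f s)) n"
  using assms integrable_ema[OF assms] by (induction n) auto

lemma norm_Clip_le:
  assumes "c \<ge> 0"
  shows "norm (Clip z c) \<le> norm z"
  by (rule norm_le_componentwise_cart) (use assms in \<open>auto simp: Clip_def\<close>)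

lemma norm_divide_componentwise_le:
  fixes z :: "real^'d"
  assumes "\<epsilon> > 0" and "\<And>i. d i \<ge> \<epsilon>"
  shows "norm (\<chi> i. z $ i / d i) \<le> norm z / \<epsilon>"
proof -
  have "norm (\<chi> i. z $ i / d i) \<le> norm ((1 / \<epsilon>) *\<^sub>R z)"
  proof (rule norm_le_componentwise_cart)
    fix i
    have "d i > 0"
      using assms(1) assms(2)[of i] by linarith
    then have "\<bar>z $ i\<bar> / d i \<le> \<bar>z $ i\<bar> / \<epsilon>"
      using assms by (intro divide_left_mono) auto
    then show "norm ((\<chi> i. z $ i / d i) $ i) \<le> norm (((1 / \<epsilon>) *\<^sub>R z) $ i)"
      using \<open>d i > 0\<close> assms by (simp add: abs_div)
  qed
  then show ?thesis
    using assms by simp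
qed

(* ema never reads x 0, so the truncated s - 1 at s = 0 is harmless. *)
lemma adopt_m_eq_ema:
  "adopt_m \<beta>1 \<beta>2 \<epsilon> c g =
     ema \<beta>1 (\<lambda>s. Clip (\<chi> i. g s $ i / max (sqrt (adopt_v \<beta>2 g (s - 1) $ i)) \<epsilon>) (c s))"
proof
  fix n
  show "adopt_m \<beta>1 \<beta>2 \<epsilon> c g n =
          ema \<beta>1 (\<lambda>s. Clip (\<chi> i. g s $ i / max (sqrt (adopt_v \<beta>2 g (s - 1) $ i)) \<epsilon>) (c s)) n"
    by (induction n) simp_all
qed

lemma power2_norm_adopt_m_le:
  assumes "0 \<le> \<beta>1" "\<beta>1 \<le> 1" "\<epsilon> > 0" and "\<And>s. c s \<ge> 0"
  shows "(norm (adopt_m \<beta>1 \<beta>2 \<epsilon> c g n))\<^sup>2 \<le> ema \<beta>1 (\<lambda>s. (norm (g s))\<^sup>2 / \<epsilon>\<^sup>2) n"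
proof -
  let ?x = "\<lambda>s. Clip (\<chi> i. g s $ i / max (sqrt (adopt_v \<beta>2 g (s - 1) $ i)) \<epsilon>) (c s)"
  have "(norm (?x s))\<^sup>2 \<le> (norm (g s))\<^sup>2 / \<epsilon>\<^sup>2" for s
  proof -
    have "norm (?x s) \<le> norm (\<chi> i. g s $ i / max (sqrt (adopt_v \<beta>2 g (s - 1) $ i)) \<epsilon>)"
      by (rule norm_Clip_le[OF assms(4)])
    also have "\<dots> \<le> norm (g s) / \<epsilon>"
      by (rule norm_divide_componentwise_le[OF assms(3)]) simp
    finally have "(norm (?x s))\<^sup>2 \<le> (norm (g s) / \<epsilon>)\<^sup>2"
      by (rule power_mono) simp
    then show ?thesis
      by (simp add: power_divide)
  qed
  then have "ema \<beta>1 (\<lambda>s. (norm (?x s))\<^sup>2) n \<le> ema \<beta>1 (\<lambda>s. (norm (g s))\<^sup>2 / \<epsilon>\<^sup>2) n"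
    using assms by (intro ema_mono) auto
  then show ?thesis
    using power2_norm_ema_le[OF assms(1,2), of ?x n] by (simp add: adopt_m_eq_ema)
qed

theorem lemmaG13:
  fixes M :: "'w measure" and g :: "nat \<Rightarrow> 'w \<Rightarrow> real^'d"
    and \<beta>1 \<beta>2 \<epsilon> G :: real and \<alpha> c :: "nat \<Rightarrow> real" and T t :: nat
  assumes "prob_space M"
    and "0 \<le> \<beta>1" "\<beta>1 < 1" "0 \<le> \<beta>2" "\<beta>2 < 1" "\<epsilon> > 0"
    and "\<And>s. \<alpha> s > 0" and "\<And>s. c s \<ge> 0"
    and "\<And>s. g s \<in> borel_measurable M"
    and "\<And>s. integrable M (\<lambda>\<omega>. (norm (g s \<omega>))\<^sup>2)"
    and "\<And>s. prob_space.expectation M (\<lambda>\<omega>. (norm (g s \<omega>))\<^sup>2) \<le> G\<^sup>2"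
    and "t \<le> T"
  shows "prob_space.expectation M (\<lambda>\<omega>. (norm (adopt_m \<beta>1 \<beta>2 \<epsilon> c (\<lambda>s. g s \<omega>) t))\<^sup>2)
           \<le> 2 * G\<^sup>2 / \<epsilon>\<^sup>2"
proof -
  let ?h = "\<lambda>\<omega>. ema \<beta>1 (\<lambda>s. (norm (g s \<omega>))\<^sup>2 / \<epsilon>\<^sup>2) t"
  have integrable_h: "integrable M ?h"
    using assms(10) by (intro integrable_ema) simp
  have "integral\<^sup>L M ?h = ema \<beta>1 (\<lambda>s. integral\<^sup>L M (\<lambda>\<omega>. (norm (g s \<omega>))\<^sup>2) / \<epsilon>\<^sup>2) t"
    using assms(10) by (subst integral_ema) simp_all
  also have "\<dots> \<le> G\<^sup>2 / \<epsilon>\<^sup>2"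
    using assms(2,3,11) by (intro ema_le_bound divide_right_mono) auto
  also have "\<dots> \<le> 2 * G\<^sup>2 / \<epsilon>\<^sup>2"
    by (simp add: divide_right_mono)
  finally have integral_h: "integral\<^sup>L M ?h \<le> 2 * G\<^sup>2 / \<epsilon>\<^sup>2" .
  show ?thesis
  proof (cases "integrable M (\<lambda>\<omega>. (norm (adopt_m \<beta>1 \<beta>2 \<epsilon> c (\<lambda>s. g s \<omega>) t))\<^sup>2)")
    case True
    have "integral\<^sup>L M (\<lambda>\<omega>. (norm (adopt_m \<beta>1 \<beta>2 \<epsilon> c (\<lambda>s. g s \<omega>) t))\<^sup>2) \<le> integral\<^sup>L M ?h"
      using assms(2,3,6,8) by (intro integral_mono[OF True integrable_h] power2_norm_adopt_m_le) auto
    then show ?thesis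
      using integral_h by linarith
  next
    case False
    then show ?thesis by (simp add: not_integrable_integral_eq)
  qed
qed

end
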